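(* Let $x,y\in\mathbb R^d$, let $\mathsf D\in\{\mathsf{KL},\mathsf R_q\}$, and let $\Phi_{x,y}:\mathbb R^d\to\mathbb R^d$ be a map such that $\tilde q_{T,h}(x,v)=q_T(y,\Phi_{x,y}(v))$ for all $v\in\mathbb R^d$. Suppose $f\in C^2$ with $\|\nabla^2f(z)\|_{op}\le L$ for all $z$, $T>0$ satisfies $LT^2\le\frac25\pi^2$, and $h\ge0$. Then \[ \mathsf D(\delta_x\tilde{\mathrm P}_{T,h}\,\|\,\delta_y\mathrm P_T)\le\mathsf D\big((\Phi_{x,y})_\#\boldsymbol\gamma_d\,\|\,\boldsymbol\gamma_d\big). \]
   Context: $f:\mathbb R^d\to\mathbb R$. $q_t(x,v)$ is the position at time $t$ of the solution of $\dot x_t=v_t,\dot v_t=-\nabla f(x_t)$ with $(x_0,v_0)=(x,v)$. For $h>0$ with $T/h\in\mathbb N$ (always assumed), $\tilde q_{T,h}(x,v)=x_N$, $N=T/h$, where $x_0=x,v_0=v$, $x_{j+1}=x_j+hv_j-\frac{h^2}2\nabla f(x_j)$, $v_{j+1}=v_j-\frac h2(\nabla f(x_j)+\nabla f(x_{j+1}))$; $\tilde q_{T,0}=q_T$. $\boldsymbol\gamma_d=\mathcal N(0,I_d)$. $\tilde{\mathrm P}_{T,h}$ (resp. $\mathrm P_T$) maps $\rho$ to the law of $\tilde q_{T,h}(X,\xi)$ (resp. $q_T(X,\xi)$), $X\sim\rho$, $\xi\sim\boldsymbol\gamma_d$ independent; $\delta_x$ is the Dirac mass. $\mathsf{KL}(\mu\|\pi)=\mathbb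 E_\mu[\log\frac{d\mu}{d\pi}]$, and for $1<q<\infty$, $\mathsf R_q(\mu\|\pi)=\frac1{q-1}\log\mathbb E_\pi[(d\mu/d\pi)^q]$, both $+\infty$ if $\mu\not\ll\pi$. $\psi_\#\rho$ is the pushforward. *)

theory Defs
  imports "HOL-Analysis.Analysis"
begin

text \<open>Position at time t of the exact Hamiltonian flow of
  x' = v, v' = - G x (G plays the role of the gradient of f), started at (x,v).\<close>
definition ham_flow_pos :: "('a::euclidean_space \<Rightarrow> 'a) \<Rightarrow> real \<Rightarrow> 'a \<Rightarrow> 'a \<Rightarrow> 'a" where
  "ham_flow_pos G t x v =
     (SOME X. \<exists>V. X 0 = x \<and> V 0 = v \<and>
        (\<forall>s. (X has_vector_derivative V s) (at s) \<and>
             (V has_vector_derivative - G (X s)) (at s))) t"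

definition lf_step :: "('a::euclidean_space \<Rightarrow> 'a) \<Rightarrow> real \<Rightarrow> 'a \<times> 'a \<Rightarrow> 'a \<times> 'a" where
  "lf_step G h p =
     (let x = fst p; v = snd p; x' = x + h *\<^sub>R v - (h^2/2) *\<^sub>R G x
      in (x', v - (h/2) *\<^sub>R (G x + G x')))"

text \<open>tilde q_{T,h}: N = T/h leapfrog steps for h > 0, and the exact flow for h = 0.\<close>
definition leapfrog_pos :: "('a::euclidean_space \<Rightarrow> 'a) \<Rightarrow> real \<Rightarrow> real \<Rightarrow> 'a \<Rightarrow> 'a \<Rightarrow> 'a" where
  "leapfrog_pos G T h x v =
     (if h = 0 then ham_flow_pos G T x v
      else fst ((lf_step G h ^^ nat \<lfloor>T / h\<rfloor>) (x, v)))"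

definition std_gaussian :: "'a::euclidean_space measure" where
  "std_gaussian = density lborel
     (\<lambda>x. ennreal ((2 * pi) powr (- real DIM('a) / 2) * exp (- ((norm x)\<^sup>2) / 2)))"

definition KL_div :: "'a measure \<Rightarrow> 'a measure \<Rightarrow> ereal" where
  "KL_div \<mu> \<pi> =
     (if absolutely_continuous \<pi> \<mu> then
        (if integrable \<mu> (\<lambda>z. ln (enn2real (RN_deriv \<pi> \<mu> z)))
         then ereal (\<integral>z. ln (enn2real (RN_deriv \<pi> \<mu> z)) \<partial>\<mu>)
         else \<infinity>)
      else \<infinity>)"

definition renyi_div :: "real \<Rightarrow> 'a measure \<Rightarrow> 'a measure \<Rightarrow> ereal" where
  "renyi_div q \<mu> \<pi> =
     (if absolutely_continuous \<pi> \<mu> then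
        (let I = (\<integral>\<^sup>+ z. ennreal ((enn2real (RN_deriv \<pi> \<mu> z)) powr q) \<partial>\<pi>)
         in if I = \<infinity> then \<infinity> else ereal (ln (enn2real I) / (q - 1)))
      else \<infinity>)"

end

theory Submission
  imports Defs "HOL-Probability.Probability"
begin

text \<open>By the coupling hypothesis both measures are pushforwards under the same map
  \<open>\<psi> = ham_flow_pos G T y\<close>: the left one of the image of the Gaussian under \<open>\<Phi>\<close>,
  the right one of the Gaussian itself. The claim is therefore the data-processing inequality
  for the KL and Renyi divergences. The density of the pushforwards, pulled back along \<open>\<psi>\<close>,
  is the conditional expectation of the original density given \<open>\<psi>\<close>, and the two
  inequalities are Jensen's inequality for \<open>- ln\<close> and for \<open>x powr q\<close>, which follow from
  \<open>ln x \<le> x - 1\<close> and from the tangent-line inequality.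

  The only property of \<open>\<psi>\<close> needed is measurability. As \<open>ham_flow_pos\<close> is defined by
  choice, this requires global existence of the flow (Picard iteration) and then Lipschitz
  dependence on the initial velocity (Gronwall); the Hessian bound makes the gradient
  Lipschitz.\<close>

section \<open>The standard Gaussian measure\<close>

lemma std_gaussian_density_eq_prod:
  fixes x :: "'a::euclidean_space"
  shows "(2 * pi) powr (- real DIM('a) / 2) * exp (- ((norm x)\<^sup>2) / 2)
       = (\<Prod>b\<in>Basis. std_normal_density (x \<bullet> b))"
proof -
  have "(norm x)\<^sup>2 = (\<Sum>b\<in>Basis. (x \<bullet> b)\<^sup>2)"
    unfolding power2_norm_eq_inner by (subst euclidean_inner) (simp add: power2_eq_square)
  then have "exp (- ((norm x)\<^sup>2) / 2) = (\<Prod>b\<in>Basis. exp (- ((x \<bullet> b)\<^sup>2) / 2))"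
    by (simp add: exp_sum[symmetric] sum_divide_distrib[symmetric] sum_negf)
  moreover have "(2 * pi) powr (- real DIM('a) / 2) = (1 / sqrt (2 * pi)) ^ DIM('a)"
    by (simp add: sqrt_def root_powr_inverse powr_minus_divide powr_divide powr_powr
        flip: powr_realpow)
  ultimately show ?thesis
    by (simp only: std_normal_density_def prod.distrib prod_constant)
qed

lemma prob_space_std_gaussian: "prob_space (std_gaussian :: 'a::euclidean_space measure)"
proof
  have "emeasure (std_gaussian :: 'a measure) (space std_gaussian)
      = (\<integral>\<^sup>+x. (\<Prod>b\<in>Basis. ennreal (std_normal_density ((x::'a) \<bullet> b))) \<partial>lborel)"
    unfolding std_gaussian_def std_gaussian_density_eq_prod
    by (simp add: emeasure_density prod_ennreal)
  also have "\<dots> = (\<Prod>b\<in>(Basis :: 'a set). \<integral>\<^sup>+t. ennreal (std_normal_density t) \<partial>lborel)"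
    by (rule nn_integral_lborel_prod) auto
  also have "\<dots> = 1"
    using prob_space.emeasure_space_1[OF prob_space_normal_density[of 1 0]]
    by (simp add: emeasure_density)
  finally show "emeasure (std_gaussian :: 'a measure) (space std_gaussian) = 1" .
qed

lemma sets_std_gaussian [simp, measurable_cong]:
  "sets (std_gaussian :: 'a::euclidean_space measure) = sets borel"
  by (simp add: std_gaussian_def)

section \<open>Data processing for KL and Renyi divergences\<close>

lemma AE_RN_deriv_pos_finite:
  assumes "finite_measure M" "finite_measure N" "sets N = sets M" "absolutely_continuous M N"
  shows "AE z in N. 0 < RN_deriv M N z \<and> RN_deriv M N z < \<infinity>"
proof -
  interpret M: finite_measure M by fact
  interpret N: finite_measure N by fact
  have "AE z in M. RN_deriv M N z \<noteq> \<infinity>"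
    using assms(3,4) by (intro M.RN_deriv_finite) unfold_locales
  then have finite: "AE z in N. RN_deriv M N z \<noteq> \<infinity>"
    by (rule absolutely_continuous_AE[OF assms(3,4)])
  have "AE z in density M (RN_deriv M N). 0 < RN_deriv M N z"
    by (subst AE_density) auto
  then have "AE z in N. 0 < RN_deriv M N z"
    unfolding M.density_RN_deriv[OF assms(4,3)] .
  with finite show ?thesis by eventually_elim (auto simp: less_top)
qed

lemma mult_neg_ln_le_one: "(t::real) \<ge> 0 \<Longrightarrow> t * max 0 (- ln t) \<le> 1"
proof (cases "t = 0")
  case False
  assume "t \<ge> 0"
  with False have t: "t > 0" by simp
  have "ln (1/t) \<le> 1/t - 1" using t by (intro ln_le_minus_one) simp
  then have "- ln t \<le> 1/t - 1" using t by (simp add: ln_div)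
  then have "t * (- ln t) \<le> t * (1/t - 1)" using t by (intro mult_left_mono) auto
  also have "\<dots> = 1 - t" using t by (simp add: field_simps)
  finally show ?thesis using t by (auto simp: max_def)
qed simp

text \<open>The tangent-line inequality \<open>x powr q \<ge> c powr q + q * c powr (q - 1) * (x - c)\<close>,
  rearranged and derived from Young's inequality.\<close>
lemma powr_tangent_le:
  fixes q x c :: real
  assumes q: "q > 1" and "x \<ge> 0" "c \<ge> 0"
  shows "q * (c powr (q - 1) * x) \<le> x powr q + (q - 1) * c powr q"
proof -
  define p where "p = q / (q - 1)"
  have p: "p > 1" "1 / q + 1 / p = 1" using q by (auto simp: p_def field_simps)
  have "x * c powr (q - 1) \<le> x powr q / q + (c powr (q - 1)) powr p / p"
    by (rule Youngs_inequality) (use assms p in auto)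
  also have "(c powr (q - 1)) powr p = c powr q"
    using assms by (simp add: powr_powr p_def)
  finally have "x * c powr (q - 1) \<le> x powr q / q + c powr q / p" .
  then have "q * (x * c powr (q - 1)) \<le> q * (x powr q / q + c powr q / p)"
    using q by (intro mult_left_mono) auto
  also have "\<dots> = x powr q + (q - 1) * c powr q" using q by (simp add: p_def field_simps)
  finally show ?thesis by (simp add: mult.commute)
qed

lemma ennreal_le_of_mult_le_add_mult:
  fixes C I :: ennreal
  assumes q: "q > 1" and C: "C \<noteq> \<infinity>" and le: "ennreal q * C \<le> I + ennreal (q - 1) * C"
  shows "C \<le> I"
proof -
  have "ennreal q = ennreal (q - 1) + 1"
    using q ennreal_plus[of "q - 1" 1] by simp
  then have "ennreal q * C = ennreal (q - 1) * C + C"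
    by (simp add: distrib_right)
  with le have "ennreal (q - 1) * C + C \<le> ennreal (q - 1) * C + I"
    by (simp add: add.commute)
  moreover have "ennreal (q - 1) * C \<noteq> \<infinity>"
    using C by (simp add: ennreal_mult_eq_top_iff)
  ultimately show ?thesis by (simp add: ennreal_add_left_cancel_le)
qed

text \<open>The hypothesis for \<open>I' = 0\<close> is needed because \<open>ln 0 = 0\<close>.\<close>
lemma ln_enn2real_mono:
  fixes I I' :: ennreal
  assumes le: "I' \<le> I" and finite: "I \<noteq> \<infinity>" and zero: "I' = 0 \<Longrightarrow> I = 0"
  shows "ln (enn2real I') \<le> ln (enn2real I)"
proof (cases "I' = 0")
  case False
  with le finite have "0 < enn2real I'"
    by (auto simp: enn2real_positive_iff less_top zero_less_iff_neq_zero top_unique)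
  moreover have "enn2real I' \<le> enn2real I"
    using le finite by (intro enn2real_mono) (auto simp: less_top)
  ultimately show ?thesis by simp
qed (simp add: zero)

lemma integrable_integral_le_measure_of_nn_integral_le:
  fixes f :: "'a \<Rightarrow> real"
  assumes "finite_measure N" and [measurable]: "f \<in> borel_measurable N"
    and nonneg: "AE z in N. 0 \<le> f z"
    and le: "(\<integral>\<^sup>+z. ennreal (f z) \<partial>N) \<le> emeasure N (space N)"
  shows "integrable N f \<and> (\<integral>z. f z \<partial>N) \<le> measure N (space N)"
proof
  interpret N: finite_measure N by fact
  have finite_space: "emeasure N (space N) < \<infinity>"
    using N.emeasure_finite by (simp add: less_top[symmetric])
  have "(\<integral>\<^sup>+z. ennreal (norm (f z)) \<partial>N) = (\<integral>\<^sup>+z. ennreal (f z) \<partial>N)"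
    using nonneg by (intro nn_integral_cong_AE) auto
  with le finite_space show "integrable N f"
    by (intro integrableI_bounded) simp_all
  have "(\<integral>z. f z \<partial>N) = enn2real (\<integral>\<^sup>+z. ennreal (f z) \<partial>N)"
    using nonneg by (intro integral_eq_nn_integral) auto
  also have "\<dots> \<le> measure N (space N)"
    unfolding measure_def using finite_space by (intro enn2real_mono[OF le]) simp
  finally show "(\<integral>z. f z \<partial>N) \<le> measure N (space N)" .
qed

lemma ln_le_ln_minus_one_add_divide:
  fixes a b :: real
  assumes "0 < a" "0 < b"
  shows "ln b \<le> ln a - 1 + b / a"
  using ln_le_minus_one[of "b / a"] assms by (simp add: ln_div)

text \<open>Gibbs' inequality, in a form that does not presuppose integrability of \<open>ln b\<close>.\<close>
lemma integral_ln_le_integral_ln: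
  fixes a b :: "'a \<Rightarrow> real"
  assumes "finite_measure N"
    and [measurable]: "a \<in> borel_measurable N" "b \<in> borel_measurable N"
    and pos: "AE z in N. 0 < a z \<and> 0 < b z"
    and int_ln_a: "integrable N (\<lambda>z. ln (a z))"
    and ratio: "(\<integral>\<^sup>+z. ennreal (b z / a z) \<partial>N) \<le> emeasure N (space N)"
    and int_neg: "integrable N (\<lambda>z. max 0 (- ln (b z)))"
  shows "integrable N (\<lambda>z. ln (b z)) \<and> (\<integral>z. ln (b z) \<partial>N) \<le> (\<integral>z. ln (a z) \<partial>N)"
proof -
  interpret N: finite_measure N by fact
  have ln_le: "AE z in N. ln (b z) \<le> ln (a z) - 1 + b z / a z"
    using pos by eventually_elim (auto intro: ln_le_ln_minus_one_add_divide)
  have "AE z in N. 0 \<le> b z / a z"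
    using pos by eventually_elim simp
  then have int_ratio: "integrable N (\<lambda>z. b z / a z)"
    and int_ratio_le: "(\<integral>z. b z / a z \<partial>N) \<le> measure N (space N)"
    using integrable_integral_le_measure_of_nn_integral_le[OF assms(1) _ _ ratio] by simp_all
  have int_ln_b: "integrable N (\<lambda>z. ln (b z))"
  proof (rule Bochner_Integration.integrable_bound)
    show "integrable N (\<lambda>z. \<bar>ln (a z)\<bar> + b z / a z + max 0 (- ln (b z)))"
      using int_ln_a int_ratio int_neg by auto
    show "AE z in N. norm (ln (b z)) \<le> norm (\<bar>ln (a z)\<bar> + b z / a z + max 0 (- ln (b z)))"
      using ln_le pos
    proof eventually_elim
      case (elim z)
      then have "b z / a z \<ge> 0" by simp
      with elim(1) show ?case unfolding real_norm_def by arith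
    qed
  qed measurable
  have "(\<integral>z. ln (b z) \<partial>N) \<le> (\<integral>z. ln (a z) - 1 + b z / a z \<partial>N)"
    using int_ln_a int_ratio by (intro integral_mono_AE[OF int_ln_b _ ln_le]) auto
  also have "\<dots> = (\<integral>z. ln (a z) \<partial>N) - measure N (space N) + (\<integral>z. b z / a z \<partial>N)"
    using int_ln_a int_ratio by simp
  finally have "(\<integral>z. ln (b z) \<partial>N) \<le> (\<integral>z. ln (a z) \<partial>N)"
    using int_ratio_le by linarith
  with int_ln_b show ?thesis ..
qed

locale data_processing =
  M: finite_measure M + N: finite_measure N
  for M N :: "'a measure" and B :: "'b measure" and \<psi> :: "'a \<Rightarrow> 'b" +
  assumes sets_N: "sets N = sets M"
    and measurable_\<psi> [measurable]: "\<psi> \<in> M \<rightarrow>\<^sub>M B"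
begin

abbreviation RN_push :: "'b \<Rightarrow> ennreal" where
  "RN_push \<equiv> RN_deriv (distr M B \<psi>) (distr N B \<psi>)"

lemma measurable_\<psi>_N [measurable]: "\<psi> \<in> N \<rightarrow>\<^sub>M B"
  using measurable_\<psi> sets_N measurable_cong_sets by blast

lemma space_N: "space N = space M"
  using sets_N by (rule sets_eq_imp_space_eq)

lemma borel_measurable_RN_deriv_N [measurable]: "RN_deriv M N \<in> borel_measurable N"
  using sets_N by (metis borel_measurable_RN_deriv measurable_cong_sets)

lemma borel_measurable_RN_push [measurable]: "RN_push \<in> borel_measurable B"
  by (metis borel_measurable_RN_deriv measurable_cong_sets sets_distr)

sublocale M': finite_measure "distr M B \<psi>"
  by (rule M.finite_measure_distr) (rule measurable_\<psi>)

sublocale N': finite_measure "distr N B \<psi>"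
  by (rule N.finite_measure_distr) (rule measurable_\<psi>_N)

lemma absolutely_continuous_distr:
  assumes ac: "absolutely_continuous M N"
  shows "absolutely_continuous (distr M B \<psi>) (distr N B \<psi>)"
  unfolding absolutely_continuous_def
proof
  fix A assume A: "A \<in> null_sets (distr M B \<psi>)"
  then have A_sets: "A \<in> sets B" and "emeasure M (\<psi> -` A \<inter> space M) = 0"
    by (auto simp: null_sets_def emeasure_distr)
  moreover have "\<psi> -` A \<inter> space M \<in> sets M"
    using A_sets by measurable
  ultimately have "\<psi> -` A \<inter> space M \<in> null_sets N"
    using ac by (auto simp: absolutely_continuous_def null_setsI)
  then show "A \<in> null_sets (distr N B \<psi>)"
    using A_sets by (auto simp: null_sets_def emeasure_distr space_N)
qed

lemma nn_integral_RN_deriv_distr: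
  assumes ac: "absolutely_continuous M N" and [measurable]: "h \<in> borel_measurable B"
  shows "(\<integral>\<^sup>+z. h (\<psi> z) * RN_deriv M N z \<partial>M)
       = (\<integral>\<^sup>+z. h (\<psi> z) * RN_push (\<psi> z) \<partial>M)"
proof -
  have "(\<integral>\<^sup>+z. h (\<psi> z) * RN_deriv M N z \<partial>M) = (\<integral>\<^sup>+z. h (\<psi> z) \<partial>N)"
    using M.RN_deriv_nn_integral[OF ac sets_N, of "\<lambda>z. h (\<psi> z)"] by (simp add: mult.commute)
  also have "\<dots> = (\<integral>\<^sup>+w. h w \<partial>distr N B \<psi>)"
    by (simp add: nn_integral_distr)
  also have "\<dots> = (\<integral>\<^sup>+w. RN_push w * h w \<partial>distr M B \<psi>)"
    by (rule M'.RN_deriv_nn_integral[OF absolutely_continuous_distr[OF ac]]) auto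
  also have "\<dots> = (\<integral>\<^sup>+z. h (\<psi> z) * RN_push (\<psi> z) \<partial>M)"
    by (simp add: nn_integral_distr mult.commute)
  finally show ?thesis .
qed

lemma AE_RN_deriv_finite:
  "absolutely_continuous M N \<Longrightarrow> AE z in M. RN_deriv M N z \<noteq> \<infinity>"
  using sets_N by (intro M.RN_deriv_finite) unfold_locales

lemma AE_RN_push_finite:
  assumes ac: "absolutely_continuous M N"
  shows "AE z in M. RN_push (\<psi> z) \<noteq> \<infinity>"
proof -
  have "AE w in distr M B \<psi>. RN_push w \<noteq> \<infinity>"
    using absolutely_continuous_distr[OF ac]
    by (intro M'.RN_deriv_finite N'.sigma_finite_measure_axioms) simp_all
  then show ?thesis
    by (subst (asm) AE_distr_iff) auto
qed

lemma AE_RN_push_pos_finite: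
  assumes ac: "absolutely_continuous M N"
  shows "AE z in N. 0 < RN_push (\<psi> z) \<and> RN_push (\<psi> z) < \<infinity>"
proof -
  have "AE w in distr N B \<psi>. 0 < RN_push w \<and> RN_push w < \<infinity>"
    using absolutely_continuous_distr[OF ac]
    by (intro AE_RN_deriv_pos_finite M'.finite_measure_axioms N'.finite_measure_axioms) simp_all
  then show ?thesis
    by (subst (asm) AE_distr_iff) auto
qed

lemma nn_integral_RN_push_ratio_le:
  assumes ac: "absolutely_continuous M N"
  shows "(\<integral>\<^sup>+z. ennreal (enn2real (RN_push (\<psi> z)) / enn2real (RN_deriv M N z)) \<partial>N)
       \<le> emeasure N (space N)"
proof -
  have "(\<integral>\<^sup>+z. ennreal (enn2real (RN_push (\<psi> z)) / enn2real (RN_deriv M N z)) \<partial>N)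
      = (\<integral>\<^sup>+z. RN_deriv M N z * ennreal (enn2real (RN_push (\<psi> z)) / enn2real (RN_deriv M N z)) \<partial>M)"
    by (rule M.RN_deriv_nn_integral[OF ac sets_N]) measurable
  also have "\<dots> \<le> (\<integral>\<^sup>+z. (\<lambda>_. 1) (\<psi> z) * RN_push (\<psi> z) \<partial>M)"
    using AE_RN_deriv_finite[OF ac]
  proof (intro nn_integral_mono_AE, eventually_elim)
    case (elim z)
    then show ?case
      by (cases "RN_deriv M N z"; cases "RN_push (\<psi> z)")
        (auto simp: ennreal_mult[symmetric] ennreal_zero_less_divide)
  qed
  also have "\<dots> = (\<integral>\<^sup>+z. RN_deriv M N z \<partial>M)"
    using nn_integral_RN_deriv_distr[OF ac, of "\<lambda>_. 1"] by simp
  also have "\<dots> = emeasure N (space N)"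
    using M.RN_deriv_nn_integral[OF ac sets_N, of "\<lambda>_. 1"] by simp
  finally show ?thesis .
qed

lemma integrable_neg_ln_RN_push:
  assumes ac: "absolutely_continuous M N"
  shows "integrable N (\<lambda>z. max 0 (- ln (enn2real (RN_push (\<psi> z)))))"
proof (rule integrableI_bounded)
  define h where "h w = ennreal (max 0 (- ln (enn2real (RN_push w))))" for w
  have [measurable]: "h \<in> borel_measurable B"
    unfolding h_def[abs_def] by measurable
  have "(\<integral>\<^sup>+z. ennreal (norm (max 0 (- ln (enn2real (RN_push (\<psi> z)))))) \<partial>N)
      = (\<integral>\<^sup>+z. h (\<psi> z) \<partial>N)"
    by (simp add: h_def)
  also have "\<dots> = (\<integral>\<^sup>+z. h (\<psi> z) * RN_deriv M N z \<partial>M)"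
    using M.RN_deriv_nn_integral[OF ac sets_N, of "\<lambda>z. h (\<psi> z)"] by (simp add: mult.commute)
  also have "\<dots> = (\<integral>\<^sup>+z. h (\<psi> z) * RN_push (\<psi> z) \<partial>M)"
    by (rule nn_integral_RN_deriv_distr[OF ac]) measurable
  also have "\<dots> \<le> (\<integral>\<^sup>+z. 1 \<partial>M)"
  proof (rule nn_integral_mono)
    fix z
    show "h (\<psi> z) * RN_push (\<psi> z) \<le> 1"
    proof (cases "RN_push (\<psi> z)")
      case (real t)
      then have "h (\<psi> z) * RN_push (\<psi> z) = ennreal (max 0 (- ln t)) * ennreal t"
        by (simp add: h_def)
      also have "\<dots> = ennreal (t * max 0 (- ln t))"
        using real by (subst ennreal_mult[symmetric]) (auto simp: mult.commute)
      also have "\<dots> \<le> 1"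
        using real mult_neg_ln_le_one[of t] by (simp del: ennreal_max_0)
      finally show ?thesis .
    qed (simp add: h_def)
  qed
  also have "\<dots> < \<infinity>"
    using M.emeasure_finite[of "space M"] by (simp add: less_top[symmetric])
  finally show "(\<integral>\<^sup>+z. ennreal (norm (max 0 (- ln (enn2real (RN_push (\<psi> z)))))) \<partial>N) < \<infinity>" .
qed measurable

theorem KL_div_distr_le: "KL_div (distr N B \<psi>) (distr M B \<psi>) \<le> KL_div N M"
proof (cases "absolutely_continuous M N \<and> integrable N (\<lambda>z. ln (enn2real (RN_deriv M N z)))")
  case False
  then show ?thesis by (auto simp: KL_div_def)
next
  case True
  then have ac: "absolutely_continuous M N" by simp
  have "AE z in N. 0 < enn2real (RN_deriv M N z) \<and> 0 < enn2real (RN_push (\<psi> z))"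
    using AE_RN_deriv_pos_finite[OF M.finite_measure_axioms N.finite_measure_axioms sets_N ac]
      AE_RN_push_pos_finite[OF ac]
    by eventually_elim (auto simp: enn2real_positive_iff)
  then have "integrable N (\<lambda>z. ln (enn2real (RN_push (\<psi> z))))
      \<and> (\<integral>z. ln (enn2real (RN_push (\<psi> z))) \<partial>N)
          \<le> (\<integral>z. ln (enn2real (RN_deriv M N z)) \<partial>N)"
    using True nn_integral_RN_push_ratio_le[OF ac] integrable_neg_ln_RN_push[OF ac]
    by (intro integral_ln_le_integral_ln N.finite_measure_axioms) simp_all
  then show ?thesis
    using absolutely_continuous_distr[OF ac] True
    by (simp add: KL_div_def integrable_distr_eq integral_distr)
qed

lemma nn_integral_truncated_powr_le_cross:
  assumes ac: "absolutely_continuous M N"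
  shows "(\<integral>\<^sup>+z. ennreal (min (enn2real (RN_push (\<psi> z))) (real n) powr q) \<partial>M)
       \<le> (\<integral>\<^sup>+z. ennreal (min (enn2real (RN_push (\<psi> z))) (real n) powr (q - 1)
                          * enn2real (RN_deriv M N z)) \<partial>M)"
proof -
  define h where "h w = ennreal (min (enn2real (RN_push w)) (real n) powr (q - 1))" for w
  have [measurable]: "h \<in> borel_measurable B"
    unfolding h_def[abs_def] by measurable
  have "(\<integral>\<^sup>+z. ennreal (min (enn2real (RN_push (\<psi> z))) (real n) powr q) \<partial>M)
      \<le> (\<integral>\<^sup>+z. h (\<psi> z) * RN_push (\<psi> z) \<partial>M)"
  proof (rule nn_integral_mono)
    fix z
    define c where "c = min (enn2real (RN_push (\<psi> z))) (real n)"
    have c_nonneg: "c \<ge> 0"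
      by (simp add: c_def)
    have "c powr q = c powr (q - 1) * c powr 1"
      by (metis powr_add diff_add_cancel)
    then have "ennreal (c powr q) = ennreal (c powr (q - 1)) * ennreal c"
      using c_nonneg by (simp add: ennreal_mult)
    also have "\<dots> \<le> h (\<psi> z) * RN_push (\<psi> z)"
    proof (rule mult_mono)
      have "ennreal c \<le> ennreal (enn2real (RN_push (\<psi> z)))"
        by (intro ennreal_leI) (simp add: c_def)
      also have "\<dots> \<le> RN_push (\<psi> z)"
        by (cases "RN_push (\<psi> z)") auto
      finally show "ennreal c \<le> RN_push (\<psi> z)" .
    qed (simp_all add: h_def c_def)
    finally show "ennreal (min (enn2real (RN_push (\<psi> z))) (real n) powr q) \<le> h (\<psi> z) * RN_push (\<psi> z)"
      by (simp add: c_def)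
  qed
  also have "\<dots> = (\<integral>\<^sup>+z. h (\<psi> z) * RN_deriv M N z \<partial>M)"
    by (rule nn_integral_RN_deriv_distr[OF ac, symmetric]) measurable
  also have "\<dots> = (\<integral>\<^sup>+z. ennreal (min (enn2real (RN_push (\<psi> z))) (real n) powr (q - 1)
                                * enn2real (RN_deriv M N z)) \<partial>M)"
    using AE_RN_deriv_finite[OF ac]
    by (intro nn_integral_cong_AE, eventually_elim) (auto simp: h_def ennreal_mult less_top)
  finally show ?thesis .
qed

text \<open>The truncation at level \<open>n\<close> keeps the left-hand side finite, so that the tangent-line
  inequality can be integrated and the common term cancelled.\<close>
lemma nn_integral_truncated_powr_le:
  assumes q: "q > 1" and ac: "absolutely_continuous M N"
  shows "(\<integral>\<^sup>+z. ennreal (min (enn2real (RN_push (\<psi> z))) (real n) powr q) \<partial>M)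
       \<le> (\<integral>\<^sup>+z. ennreal (enn2real (RN_deriv M N z) powr q) \<partial>M)"
    (is "?C \<le> ?I")
proof -
  define c where "c z = min (enn2real (RN_push (\<psi> z))) (real n)" for z
  have c_nonneg: "c z \<ge> 0" for z
    by (simp add: c_def)
  have "?C \<le> (\<integral>\<^sup>+z. ennreal (real n powr q) \<partial>M)"
    using q by (intro nn_integral_mono ennreal_leI powr_mono2) auto
  also have "\<dots> < \<infinity>"
    using M.emeasure_finite[of "space M"] by (simp add: ennreal_mult_eq_top_iff less_top[symmetric])
  finally have C_finite: "?C \<noteq> \<infinity>" by simp
  have "ennreal q * ?C \<le> (\<integral>\<^sup>+z. ennreal q * ennreal (c z powr (q - 1) * enn2real (RN_deriv M N z)) \<partial>M)"
    using nn_integral_truncated_powr_le_cross[OF ac, of n q]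
    by (subst nn_integral_cmult) (auto simp: c_def intro: mult_left_mono)
  also have "\<dots> \<le> (\<integral>\<^sup>+z. ennreal (enn2real (RN_deriv M N z) powr q)
                          + ennreal (q - 1) * ennreal (c z powr q) \<partial>M)"
  proof (rule nn_integral_mono)
    fix z
    have "q * (c z powr (q - 1) * enn2real (RN_deriv M N z))
        \<le> enn2real (RN_deriv M N z) powr q + (q - 1) * c z powr q"
      using q c_nonneg by (intro powr_tangent_le) auto
    then show "ennreal q * ennreal (c z powr (q - 1) * enn2real (RN_deriv M N z))
        \<le> ennreal (enn2real (RN_deriv M N z) powr q) + ennreal (q - 1) * ennreal (c z powr q)"
      using q by (simp add: ennreal_mult[symmetric] ennreal_plus[symmetric] ennreal_leI del: ennreal_plus)
  qed
  also have "\<dots> = ?I + ennreal (q - 1) * ?C"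
    by (subst nn_integral_add) (auto simp: nn_integral_cmult c_def)
  finally show ?thesis
    by (rule ennreal_le_of_mult_le_add_mult[OF q C_finite])
qed

lemma nn_integral_powr_RN_push_le:
  assumes q: "q > 1" and ac: "absolutely_continuous M N"
  shows "(\<integral>\<^sup>+z. ennreal (enn2real (RN_push (\<psi> z)) powr q) \<partial>M)
       \<le> (\<integral>\<^sup>+z. ennreal (enn2real (RN_deriv M N z) powr q) \<partial>M)"
proof -
  define b where "b z = enn2real (RN_push (\<psi> z))" for z
  have [measurable]: "b \<in> borel_measurable M"
    unfolding b_def[abs_def] by measurable
  have incseq: "incseq (\<lambda>n z. ennreal (min (b z) (real n) powr q))"
    using q by (intro monoI le_funI ennreal_leI powr_mono2) (auto simp: b_def)
  have "ennreal (b z powr q) = (SUP n. ennreal (min (b z) (real n) powr q))" for z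
  proof (rule antisym)
    obtain n :: nat where "b z \<le> real n" using real_arch_simple by blast
    then show "ennreal (b z powr q) \<le> (SUP n. ennreal (min (b z) (real n) powr q))"
      by (intro SUP_upper2[of n]) auto
    show "(SUP n. ennreal (min (b z) (real n) powr q)) \<le> ennreal (b z powr q)"
      using q by (intro SUP_least ennreal_leI powr_mono2) (auto simp: b_def)
  qed
  then have "(\<integral>\<^sup>+z. ennreal (b z powr q) \<partial>M)
      = (SUP n. \<integral>\<^sup>+z. ennreal (min (b z) (real n) powr q) \<partial>M)"
    by (simp add: nn_integral_monotone_convergence_SUP[OF incseq])
  also have "\<dots> \<le> (\<integral>\<^sup>+z. ennreal (enn2real (RN_deriv M N z) powr q) \<partial>M)"
    unfolding b_def by (intro SUP_least nn_integral_truncated_powr_le[OF q ac])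
  finally show ?thesis by (simp add: b_def)
qed

lemma nn_integral_powr_RN_push_eq_0:
  assumes q: "q > 1" and ac: "absolutely_continuous M N"
    and zero: "(\<integral>\<^sup>+z. ennreal (enn2real (RN_push (\<psi> z)) powr q) \<partial>M) = 0"
  shows "(\<integral>\<^sup>+z. ennreal (enn2real (RN_deriv M N z) powr q) \<partial>M) = 0"
proof -
  have "AE z in M. ennreal (enn2real (RN_push (\<psi> z)) powr q) = 0"
    using zero by (subst (asm) nn_integral_0_iff_AE) auto
  with AE_RN_push_finite[OF ac] have "AE z in M. RN_push (\<psi> z) = 0"
    by eventually_elim (auto simp: enn2real_eq_0_iff)
  then have "(\<integral>\<^sup>+z. RN_push (\<psi> z) \<partial>M) = 0"
    by (simp add: nn_integral_0_iff_AE)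
  then have "(\<integral>\<^sup>+z. RN_deriv M N z \<partial>M) = 0"
    using nn_integral_RN_deriv_distr[OF ac, of "\<lambda>_. 1"] by simp
  then have "AE z in M. RN_deriv M N z = 0"
    by (subst (asm) nn_integral_0_iff_AE) auto
  then have "AE z in M. ennreal (enn2real (RN_deriv M N z) powr q) = 0"
    by eventually_elim simp
  then show ?thesis
    by (simp add: nn_integral_0_iff_AE)
qed

theorem renyi_div_distr_le:
  assumes q: "q > 1"
  shows "renyi_div q (distr N B \<psi>) (distr M B \<psi>) \<le> renyi_div q N M"
proof (cases "absolutely_continuous M N")
  case False
  then show ?thesis by (simp add: renyi_div_def)
next
  case ac: True
  define I where "I = (\<integral>\<^sup>+z. ennreal (enn2real (RN_deriv M N z) powr q) \<partial>M)"
  define I' where "I' = (\<integral>\<^sup>+z. ennreal (enn2real (RN_push (\<psi> z)) powr q) \<partial>M)"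
  have I'_eq: "(\<integral>\<^sup>+w. ennreal (enn2real (RN_push w) powr q) \<partial>distr M B \<psi>) = I'"
    unfolding I'_def by (subst nn_integral_distr) auto
  have I'_le: "I' \<le> I"
    unfolding I_def I'_def by (rule nn_integral_powr_RN_push_le[OF q ac])
  show ?thesis
  proof (cases "I = \<infinity>")
    case True
    with ac show ?thesis by (simp add: renyi_div_def I_def)
  next
    case False
    with I'_le have I'_finite: "I' \<noteq> \<infinity>" by (auto simp: top_unique)
    have "ln (enn2real I') \<le> ln (enn2real I)"
      using I'_le False nn_integral_powr_RN_push_eq_0[OF q ac]
      by (intro ln_enn2real_mono) (auto simp: I_def I'_def)
    then have "ln (enn2real I') / (q - 1) \<le> ln (enn2real I) / (q - 1)"
      using q by (intro divide_right_mono) auto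
    then show ?thesis
      using ac absolutely_continuous_distr[OF ac] False I'_finite
      by (simp add: renyi_div_def I'_eq flip: I_def)
  qed
qed

end

section \<open>Global solutions of Lipschitz ODEs\<close>

definition oriented_integral :: "(real \<Rightarrow> 'e::banach) \<Rightarrow> real \<Rightarrow> 'e" where
  "oriented_integral g t = integral {0..t} g - integral {t..0} g"

lemma oriented_integral_0 [simp]: "oriented_integral g 0 = 0"
  by (simp add: oriented_integral_def)

lemma oriented_integral_nonneg: "0 \<le> t \<Longrightarrow> oriented_integral g t = integral {0..t} g"
  by (cases "t = 0") (auto simp: oriented_integral_def)

lemma oriented_integral_reflect: "oriented_integral g t = - oriented_integral (\<lambda>s. g (- s)) (- t)"
  using Henstock_Kurzweil_Integration.integral_reflect_real[of t 0 g]
    Henstock_Kurzweil_Integration.integral_reflect_real[of 0 t g]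
  by (simp add: oriented_integral_def)

lemma oriented_integral_eq_integral_from:
  fixes g :: "real \<Rightarrow> 'e::banach"
  assumes g: "continuous_on UNIV g" and "a \<le> t" "a \<le> 0"
  shows "oriented_integral g t = integral {a..t} g - integral {a..0} g"
proof -
  have integrable: "g integrable_on {u..v}" for u v
    by (intro integrable_continuous_interval continuous_on_subset[OF g]) simp
  show ?thesis
  proof (cases "0 \<le> t")
    case True
    then have "integral {a..0} g + integral {0..t} g = integral {a..t} g"
      using assms integrable by (intro Henstock_Kurzweil_Integration.integral_combine) auto
    with True show ?thesis by (auto simp: oriented_integral_nonneg algebra_simps)
  next
    case False
    then have "integral {a..t} g + integral {t..0} g = integral {a..0} g"
      using assms integrable by (intro Henstock_Kurzweil_Integration.integral_combine) auto
    with False show ?thesis by (auto simp: oriented_integral_def algebra_simps)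
  qed
qed

lemma has_vector_derivative_oriented_integral:
  fixes g :: "real \<Rightarrow> 'e::banach"
  assumes g: "continuous_on UNIV g"
  shows "(oriented_integral g has_vector_derivative g s) (at s)"
proof -
  define a where "a = min s 0 - 1"
  define b where "b = max s 0 + 1"
  have "((\<lambda>u. integral {a..u} g) has_vector_derivative g s) (at s within {a..b})"
    by (rule integral_has_vector_derivative) (auto intro: continuous_on_subset[OF g] simp: a_def b_def)
  moreover have "at s within {a..b} = at s"
    by (rule at_within_Icc_at) (auto simp: a_def b_def)
  ultimately have "((\<lambda>u. integral {a..u} g - integral {a..0} g) has_vector_derivative g s) (at s)"
    using has_vector_derivative_diff[where g' = 0] by fastforce
  then show ?thesis
  proof (rule has_vector_derivative_transform_within_open[where S = "{a<..}"])
    show "integral {a..u} g - integral {a..0} g = oriented_integral g u" if "u \<in> {a<..}" for u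
      using that by (intro oriented_integral_eq_integral_from[OF g, symmetric]) (auto simp: a_def)
  qed (auto simp: a_def)
qed

lemma continuous_on_oriented_integral:
  fixes g :: "real \<Rightarrow> 'e::banach"
  shows "continuous_on UNIV g \<Longrightarrow> continuous_on UNIV (oriented_integral g)"
  by (meson continuous_at_imp_continuous_on has_vector_derivative_continuous
      has_vector_derivative_oriented_integral)

lemma oriented_integral_diff:
  fixes g h :: "real \<Rightarrow> 'e::banach"
  assumes g: "continuous_on UNIV g" and h: "continuous_on UNIV h"
  shows "oriented_integral g t - oriented_integral h t = oriented_integral (\<lambda>s. g s - h s) t"
proof -
  have "g integrable_on {u..v}" "h integrable_on {u..v}" for u v
    by (auto intro: integrable_continuous_interval continuous_on_subset[OF g] continuous_on_subset[OF h])
  then show ?thesis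
    by (simp add: oriented_integral_def integral_diff algebra_simps)
qed

lemma has_integral_cmult_power:
  fixes C t :: real
  assumes "0 \<le> t"
  shows "((\<lambda>s. C * s ^ m) has_integral C * t ^ Suc m / Suc m) {0..t}"
proof -
  have "((\<lambda>s. C * s ^ m) has_integral C * t ^ Suc m / Suc m - C * 0 ^ Suc m / Suc m) {0..t}"
  proof (rule fundamental_theorem_of_calculus[OF assms])
    fix x :: real
    have "((\<lambda>s. s ^ Suc m) has_real_derivative real (Suc m) * x ^ m) (at x)"
      using DERIV_pow[of "Suc m" x] by simp
    then have "((\<lambda>s. C * s ^ Suc m / Suc m) has_real_derivative C * (real (Suc m) * x ^ m) / Suc m) (at x)"
      by (intro DERIV_cdivide DERIV_cmult)
    then show "((\<lambda>s. C * s ^ Suc m / Suc m) has_vector_derivative C * x ^ m) (at x within {0..t})"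
      by (simp del: of_nat_Suc add: has_real_derivative_iff_has_vector_derivative[symmetric]
          has_field_derivative_at_within)
  qed
  then show ?thesis by simp
qed

lemma norm_integral_le_cmult_power:
  fixes g :: "real \<Rightarrow> 'e::banach"
  assumes g: "continuous_on {0..t} g" and t: "0 \<le> t"
    and bound: "\<And>s. s \<in> {0..t} \<Longrightarrow> norm (g s) \<le> C * s ^ m"
  shows "norm (integral {0..t} g) \<le> C * t ^ Suc m / Suc m"
proof -
  have "norm (integral {0..t} g) \<le> integral {0..t} (\<lambda>s. C * s ^ m)"
  proof (rule integral_norm_bound_integral)
    show "g integrable_on {0..t}"
      using g by (rule integrable_continuous_interval)
    show "(\<lambda>s. C * s ^ m) integrable_on {0..t}"
      using has_integral_cmult_power[OF t] by blast
  qed (rule bound)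
  also have "\<dots> = C * t ^ Suc m / Suc m"
    using has_integral_cmult_power[OF t] by (rule integral_unique)
  finally show ?thesis .
qed

lemma norm_oriented_integral_le:
  fixes g :: "real \<Rightarrow> 'e::banach"
  assumes g: "continuous_on UNIV g"
    and bound: "\<And>s. \<bar>s\<bar> \<le> \<bar>t\<bar> \<Longrightarrow> norm (g s) \<le> C * \<bar>s\<bar> ^ m"
  shows "norm (oriented_integral g t) \<le> C * \<bar>t\<bar> ^ Suc m / Suc m"
proof (cases "0 \<le> t")
  case True
  have "norm (g s) \<le> C * s ^ m" if "s \<in> {0..t}" for s
    using that bound[of s] by auto
  then have "norm (integral {0..t} g) \<le> C * t ^ Suc m / Suc m"
    using True by (intro norm_integral_le_cmult_power continuous_on_subset[OF g]) auto
  with True show ?thesis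
    by (simp add: oriented_integral_nonneg)
next
  case False
  have g_reflect: "continuous_on UNIV (\<lambda>s. g (- s))"
    by (intro continuous_on_compose2[OF g] continuous_intros) auto
  have "norm (g (- s)) \<le> C * s ^ m" if "s \<in> {0..- t}" for s
    using that bound[of "- s"] by auto
  then have "norm (integral {0..- t} (\<lambda>s. g (- s))) \<le> C * (- t) ^ Suc m / Suc m"
    using False by (intro norm_integral_le_cmult_power continuous_on_subset[OF g_reflect]) auto
  with False show ?thesis
    by (subst oriented_integral_reflect) (simp add: oriented_integral_nonneg)
qed

lemma summable_power_div_fact_Suc: "summable (\<lambda>k. x ^ k / fact (Suc k) :: real)"
proof (rule summable_comparison_test)
  show "summable (\<lambda>k. inverse (fact k) * \<bar>x\<bar> ^ k)"
    by (rule summable_exp)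
  have "\<bar>x\<bar> ^ k / fact (Suc k) \<le> \<bar>x\<bar> ^ k / fact k" for k
    by (intro divide_left_mono) (auto simp: fact_mono)
  then show "\<exists>N. \<forall>k\<ge>N. norm (x ^ k / fact (Suc k)) \<le> inverse (fact k) * \<bar>x\<bar> ^ k"
    by (auto simp: power_abs field_simps)
qed

primrec picard_iterate :: "('e::banach \<Rightarrow> 'e) \<Rightarrow> 'e \<Rightarrow> nat \<Rightarrow> real \<Rightarrow> 'e" where
  "picard_iterate F z0 0 = (\<lambda>_. z0)"
| "picard_iterate F z0 (Suc n) = (\<lambda>t. z0 + oriented_integral (\<lambda>s. F (picard_iterate F z0 n s)) t)"

context
  fixes F :: "'e::banach \<Rightarrow> 'e" and K :: real
  assumes lipschitz: "K-lipschitz_on UNIV F"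
begin

private lemma K_nonneg: "K \<ge> 0"
  using lipschitz by (rule lipschitz_on_nonneg)

private lemma norm_F_diff_le: "norm (F u - F v) \<le> K * norm (u - v)"
  using lipschitz by (rule lipschitz_on_normD) auto

private lemma continuous_on_F_comp:
  "continuous_on UNIV Y \<Longrightarrow> continuous_on UNIV (\<lambda>s. F (Y s))"
  using continuous_on_compose2[OF lipschitz_on_continuous_on[OF lipschitz]] by auto

lemma continuous_on_picard_iterate: "continuous_on UNIV (picard_iterate F z0 n)"
  by (induction n) (simp_all add: continuous_on_add continuous_on_oriented_integral continuous_on_F_comp)

lemma norm_picard_iterate_diff_le:
  "norm (picard_iterate F z0 (Suc n) t - picard_iterate F z0 n t)
     \<le> norm (F z0) * K ^ n * \<bar>t\<bar> ^ Suc n / fact (Suc n)"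
proof (induction n arbitrary: t)
  case 0
  have "norm (oriented_integral (\<lambda>s. F z0) t) \<le> norm (F z0) * \<bar>t\<bar> ^ Suc 0 / Suc 0"
    by (rule norm_oriented_integral_le) auto
  then show ?case by simp
next
  case (Suc n)
  let ?P = "picard_iterate F z0"
  have "?P (Suc (Suc n)) t - ?P (Suc n) t
      = oriented_integral (\<lambda>s. F (?P (Suc n) s)) t - oriented_integral (\<lambda>s. F (?P n s)) t"
    by (simp only: fun_cong[OF picard_iterate.simps(2)[of F z0 "Suc n"], of t]
        fun_cong[OF picard_iterate.simps(2)[of F z0 n], of t] add_diff_cancel_left)
  also have "\<dots> = oriented_integral (\<lambda>s. F (?P (Suc n) s) - F (?P n s)) t"
    by (intro oriented_integral_diff continuous_on_F_comp continuous_on_picard_iterate)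
  also have "norm \<dots> \<le> (norm (F z0) * K ^ Suc n / fact (Suc n)) * \<bar>t\<bar> ^ Suc (Suc n) / Suc (Suc n)"
  proof (rule norm_oriented_integral_le)
    show "continuous_on UNIV (\<lambda>s. F (?P (Suc n) s) - F (?P n s))"
      by (intro continuous_intros continuous_on_F_comp continuous_on_picard_iterate)
    fix s :: real
    have "norm (F (?P (Suc n) s) - F (?P n s)) \<le> K * norm (?P (Suc n) s - ?P n s)"
      by (rule norm_F_diff_le)
    also have "\<dots> \<le> K * (norm (F z0) * K ^ n * \<bar>s\<bar> ^ Suc n / fact (Suc n))"
      using Suc.IH K_nonneg by (rule mult_left_mono)
    finally show "norm (F (?P (Suc n) s) - F (?P n s)) \<le> norm (F z0) * K ^ Suc n / fact (Suc n) * \<bar>s\<bar> ^ Suc n"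
      by (simp add: field_simps)
  qed
  also have "\<dots> = norm (F z0) * K ^ Suc n * \<bar>t\<bar> ^ Suc (Suc n) / fact (Suc (Suc n))"
    by (simp add: field_simps del: fact_Suc of_nat_Suc) (simp add: algebra_simps)
  finally show ?case .
qed

lemma uniform_limit_picard_iterate:
  obtains Z where "\<And>R. uniform_limit {-R..R} (picard_iterate F z0) Z sequentially"
proof
  let ?P = "picard_iterate F z0"
  fix R :: real
  define C where "C k = norm (F z0) * \<bar>R\<bar> * ((K * \<bar>R\<bar>) ^ k / fact (Suc k))" for k
  have "summable C"
    unfolding C_def by (intro summable_mult summable_power_div_fact_Suc)
  then have "uniform_limit {-R..R} (\<lambda>n t. \<Sum>k<n. ?P (Suc k) t - ?P k t)
      (\<lambda>t. \<Sum>k. ?P (Suc k) t - ?P k t) sequentially"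
  proof (rule Weierstrass_m_test[rotated])
    fix n and t :: real
    assume "t \<in> {-R..R}"
    then have "\<bar>t\<bar> ^ Suc n \<le> \<bar>R\<bar> ^ Suc n"
      by (intro power_mono) auto
    then have "norm (F z0) * K ^ n * \<bar>t\<bar> ^ Suc n / fact (Suc n)
        \<le> norm (F z0) * K ^ n * \<bar>R\<bar> ^ Suc n / fact (Suc n)"
      using K_nonneg by (intro divide_right_mono mult_left_mono) auto
    also have "\<dots> = C n"
      by (simp add: C_def power_mult_distrib)
    finally have "norm (F z0) * K ^ n * \<bar>t\<bar> ^ Suc n / fact (Suc n) \<le> C n" .
    then show "norm (?P (Suc n) t - ?P n t) \<le> C n"
      using norm_picard_iterate_diff_le order_trans by blast
  qed
  then have "uniform_limit {-R..R} (\<lambda>n t. z0 + (\<Sum>k<n. ?P (Suc k) t - ?P k t))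
      (\<lambda>t. z0 + (\<Sum>k. ?P (Suc k) t - ?P k t)) sequentially"
    by (intro uniform_limit_intros)
  moreover have "z0 + (\<Sum>k<n. ?P (Suc k) t - ?P k t) = ?P n t" for n t
    by (subst sum_lessThan_telescope) simp
  ultimately show "uniform_limit {-R..R} ?P (\<lambda>t. z0 + (\<Sum>k. ?P (Suc k) t - ?P k t)) sequentially"
    by simp
qed

lemma tendsto_oriented_integral_uniform_limit:
  assumes lim: "uniform_limit {-\<bar>t\<bar>..\<bar>t\<bar>} Y Z sequentially"
    and Y_cont: "\<And>n. continuous_on UNIV (Y n)" and Z_cont: "continuous_on UNIV Z"
  shows "(\<lambda>n. oriented_integral (\<lambda>s. F (Y n s)) t) \<longlonglongrightarrow> oriented_integral (\<lambda>s. F (Z s)) t"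
proof (rule tendstoI)
  fix e :: real
  assume e: "e > 0"
  define e' where "e' = e / (K * \<bar>t\<bar> + 1)"
  have "K * \<bar>t\<bar> \<ge> 0" using K_nonneg by simp
  then have e': "e' > 0" "K * \<bar>t\<bar> * e' < e"
    using e by (auto simp: e'_def field_simps)
  have "\<forall>\<^sub>F n in sequentially. \<forall>s\<in>{-\<bar>t\<bar>..\<bar>t\<bar>}. dist (Y n s) (Z s) < e'"
    using lim e'(1) by (rule uniform_limitD)
  then show "\<forall>\<^sub>F n in sequentially.
      dist (oriented_integral (\<lambda>s. F (Y n s)) t) (oriented_integral (\<lambda>s. F (Z s)) t) < e"
  proof eventually_elim
    case (elim n)
    have "dist (oriented_integral (\<lambda>s. F (Y n s)) t) (oriented_integral (\<lambda>s. F (Z s)) t)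
        = norm (oriented_integral (\<lambda>s. F (Y n s) - F (Z s)) t)"
      by (simp add: dist_norm oriented_integral_diff continuous_on_F_comp Y_cont Z_cont)
    also have "\<dots> \<le> K * e' * \<bar>t\<bar> ^ Suc 0 / Suc 0"
    proof (rule norm_oriented_integral_le)
      show "continuous_on UNIV (\<lambda>s. F (Y n s) - F (Z s))"
        by (intro continuous_intros continuous_on_F_comp Y_cont Z_cont)
      fix s :: real
      assume "\<bar>s\<bar> \<le> \<bar>t\<bar>"
      then have "s \<in> {-\<bar>t\<bar>..\<bar>t\<bar>}" by auto
      with elim have "norm (Y n s - Z s) \<le> e'"
        by (simp add: dist_norm less_imp_le)
      then have "K * norm (Y n s - Z s) \<le> K * e'"
        using K_nonneg by (rule mult_left_mono)
      with norm_F_diff_le show "norm (F (Y n s) - F (Z s)) \<le> K * e' * \<bar>s\<bar> ^ 0"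
        by (metis order_trans power_0 mult_1_right)
    qed
    also have "\<dots> < e"
      using e' by (simp add: mult.commute mult.left_commute)
    finally show ?case .
  qed
qed

theorem lipschitz_ode_exists: "\<exists>Z. Z 0 = z0 \<and> (\<forall>s. (Z has_vector_derivative F (Z s)) (at s))"
proof -
  let ?P = "picard_iterate F z0"
  obtain Z where lim: "\<And>R. uniform_limit {-R..R} ?P Z sequentially"
    using uniform_limit_picard_iterate[of z0] by blast
  have Z_cont: "continuous_on UNIV Z"
  proof (rule continuous_at_imp_continuous_on, intro ballI)
    fix s :: real
    have "continuous_on {-(\<bar>s\<bar> + 1)..\<bar>s\<bar> + 1} Z"
      using lim by (rule uniform_limit_theorem[rotated])
        (auto intro: always_eventually continuous_on_subset[OF continuous_on_picard_iterate])
    moreover have "s \<in> interior {-(\<bar>s\<bar> + 1)..\<bar>s\<bar> + 1}" by auto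
    ultimately show "isCont Z s"
      using continuous_on_interior by blast
  qed
  have fixed_point: "Z t = z0 + oriented_integral (\<lambda>s. F (Z s)) t" for t
  proof (rule LIMSEQ_unique)
    show "(\<lambda>n. ?P (Suc n) t) \<longlonglongrightarrow> Z t"
      by (intro LIMSEQ_Suc tendsto_uniform_limitI[OF lim[of "\<bar>t\<bar>"]]) (auto simp: abs_if)
    show "(\<lambda>n. ?P (Suc n) t) \<longlonglongrightarrow> z0 + oriented_integral (\<lambda>s. F (Z s)) t"
      using lim Z_cont continuous_on_picard_iterate
      by (simp only: picard_iterate.simps) (intro tendsto_intros tendsto_oriented_integral_uniform_limit)
  qed
  have "(Z has_vector_derivative F (Z s)) (at s)" for s
  proof -
    have "((\<lambda>t. z0 + oriented_integral (\<lambda>s. F (Z s)) t) has_vector_derivative 0 + F (Z s)) (at s)"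
      by (intro derivative_intros has_vector_derivative_oriented_integral continuous_on_F_comp Z_cont)
    then show ?thesis
      by (simp flip: fixed_point)
  qed
  moreover have "Z 0 = z0"
    using fixed_point[of 0] by simp
  ultimately show ?thesis by blast
qed

end

lemma inner_diff_le_lipschitz:
  fixes F :: "'e::real_inner \<Rightarrow> 'e"
  assumes "K-lipschitz_on UNIV F"
  shows "(u - v) \<bullet> (F u - F v) \<le> K * ((u - v) \<bullet> (u - v))"
proof -
  have "(u - v) \<bullet> (F u - F v) \<le> norm (u - v) * norm (F u - F v)"
    by (rule norm_cauchy_schwarz)
  also have "\<dots> \<le> norm (u - v) * (K * norm (u - v))"
    using lipschitz_on_normD[OF assms] by (intro mult_left_mono) auto
  also have "\<dots> = K * ((u - v) \<bullet> (u - v))"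
    by (simp add: dot_square_norm power2_eq_square)
  finally show ?thesis .
qed

lemma lipschitz_ode_dist_sq_decay:
  fixes F :: "'e::real_inner \<Rightarrow> 'e"
  assumes lipschitz: "K-lipschitz_on UNIV F"
    and Z1: "\<And>s. (Z1 has_vector_derivative F (Z1 s)) (at s)"
    and Z2: "\<And>s. (Z2 has_vector_derivative F (Z2 s)) (at s)"
    and t: "t \<ge> 0"
  shows "exp (- (2 * K) * t) * (norm (Z1 t - Z2 t))\<^sup>2 \<le> (norm (Z1 0 - Z2 0))\<^sup>2"
proof -
  define W where "W s = Z1 s - Z2 s" for s
  define w where "w s = F (Z1 s) - F (Z2 s)" for s
  define \<phi> where "\<phi> s = exp (- (2 * K) * s) * (W s \<bullet> W s)" for s
  have dW: "(W has_derivative (\<lambda>h. h *\<^sub>R w s)) (at s)" for s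
    using has_vector_derivative_diff[OF Z1 Z2]
    unfolding has_vector_derivative_def W_def w_def by (simp add: fun_diff_def)
  have dWW: "((\<lambda>s. W s \<bullet> W s) has_real_derivative 2 * (W s \<bullet> w s)) (at s)" for s
    unfolding has_field_derivative_def
    by (rule has_derivative_eq_rhs[OF has_derivative_inner[OF dW dW]]) (auto simp: inner_commute algebra_simps)
  have dexp: "((\<lambda>s. exp (- (2 * K) * s)) has_real_derivative exp (- (2 * K) * s) * (- (2 * K))) (at s)" for s
    by (rule derivative_eq_intros refl | simp)+
  have d\<phi>: "(\<phi> has_real_derivative
      exp (- (2 * K) * s) * (- (2 * K)) * (W s \<bullet> W s) + 2 * (W s \<bullet> w s) * exp (- (2 * K) * s)) (at s)" for s
    unfolding \<phi>_def[abs_def] by (rule DERIV_mult[OF dexp dWW])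
  have d\<phi>_nonpos:
    "exp (- (2 * K) * s) * (- (2 * K)) * (W s \<bullet> W s) + 2 * (W s \<bullet> w s) * exp (- (2 * K) * s) \<le> 0"
    for s
  proof -
    have "2 * (W s \<bullet> w s) - 2 * K * (W s \<bullet> W s) \<le> 0"
      using inner_diff_le_lipschitz[OF lipschitz, of "Z1 s" "Z2 s"] by (simp add: W_def w_def)
    then have "exp (- (2 * K) * s) * (2 * (W s \<bullet> w s) - 2 * K * (W s \<bullet> W s)) \<le> 0"
      by (simp add: mult_nonneg_nonpos)
    then show ?thesis
      by (simp add: algebra_simps)
  qed
  have "\<phi> t \<le> \<phi> 0"
    by (rule DERIV_nonpos_imp_nonincreasing[OF t]) (use d\<phi> d\<phi>_nonpos in blast)
  then show ?thesis
    by (simp add: \<phi>_def W_def dot_square_norm)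
qed

lemma lipschitz_ode_dist_le:
  fixes F :: "'e::real_inner \<Rightarrow> 'e"
  assumes lipschitz: "K-lipschitz_on UNIV F"
    and Z1: "\<And>s. (Z1 has_vector_derivative F (Z1 s)) (at s)"
    and Z2: "\<And>s. (Z2 has_vector_derivative F (Z2 s)) (at s)"
    and t: "t \<ge> 0"
  shows "norm (Z1 t - Z2 t) \<le> norm (Z1 0 - Z2 0) * exp (K * t)"
proof -
  have "exp (2 * K * t) * (exp (- (2 * K) * t) * (norm (Z1 t - Z2 t))\<^sup>2)
      \<le> exp (2 * K * t) * (norm (Z1 0 - Z2 0))\<^sup>2"
    using lipschitz_ode_dist_sq_decay[OF assms] by (intro mult_left_mono) auto
  then have "(norm (Z1 t - Z2 t))\<^sup>2 \<le> exp (K * t) * exp (K * t) * (norm (Z1 0 - Z2 0))\<^sup>2"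
    by (simp add: mult.assoc[symmetric] flip: exp_add)
  also have "\<dots> = (norm (Z1 0 - Z2 0) * exp (K * t))\<^sup>2"
    by (simp add: power2_eq_square)
  finally show ?thesis
    by (rule power2_le_imp_le) simp
qed

section \<open>The Hamiltonian flow\<close>

lemma lipschitz_hamiltonian_field:
  fixes G :: "'a::real_normed_vector \<Rightarrow> 'a"
  assumes "L-lipschitz_on UNIV G"
  shows "(sqrt (1 + L\<^sup>2))-lipschitz_on UNIV (\<lambda>p :: 'a \<times> 'a. (snd p, - G (fst p)))"
proof -
  have snd: "1-lipschitz_on UNIV (snd :: 'a \<times> 'a \<Rightarrow> 'a)"
    by (intro lipschitz_onI) (auto simp: dist_snd_le)
  have G_fst: "L-lipschitz_on UNIV (\<lambda>p :: 'a \<times> 'a. - G (fst p))"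
  proof (rule lipschitz_onI)
    fix p q :: "'a \<times> 'a"
    have "dist (G (fst p)) (G (fst q)) \<le> L * dist (fst p) (fst q)"
      using assms by (rule lipschitz_onD) auto
    also have "\<dots> \<le> L * dist p q"
      using assms by (intro mult_left_mono dist_fst_le lipschitz_on_nonneg)
    finally show "dist (- G (fst p)) (- G (fst q)) \<le> L * dist p q"
      by (simp add: dist_minus)
  qed (rule lipschitz_on_nonneg[OF assms])
  show ?thesis
    using lipschitz_on_Pair[OF snd G_fst] by simp
qed

lemma ham_flow_pos_solves:
  fixes G :: "'a::euclidean_space \<Rightarrow> 'a"
  assumes "L-lipschitz_on UNIV G"
  shows "\<exists>V. ham_flow_pos G 0 x v = x \<and> V 0 = v \<and>
           (\<forall>s. ((\<lambda>t. ham_flow_pos G t x v) has_vector_derivative V s) (at s) \<and>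
                (V has_vector_derivative - G (ham_flow_pos G s x v)) (at s))"
proof -
  obtain Z where Z: "Z 0 = (x, v)" "\<And>s. (Z has_vector_derivative (snd (Z s), - G (fst (Z s)))) (at s)"
    using lipschitz_ode_exists[OF lipschitz_hamiltonian_field[OF assms]] by blast
  have "\<exists>X V. X 0 = x \<and> V 0 = v \<and>
      (\<forall>s. (X has_vector_derivative V s) (at s) \<and> (V has_vector_derivative - G (X s)) (at s))"
  proof (intro exI conjI allI)
    fix s
    show "((\<lambda>t. fst (Z t)) has_vector_derivative snd (Z s)) (at s)"
      using bounded_linear.has_vector_derivative[OF bounded_linear_fst Z(2)] by simp
    show "((\<lambda>t. snd (Z t)) has_vector_derivative - G (fst (Z s))) (at s)"
      using bounded_linear.has_vector_derivative[OF bounded_linear_snd Z(2)] by simp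
  qed (use Z(1) in simp_all)
  from someI_ex[OF this] show ?thesis
    unfolding ham_flow_pos_def by simp
qed

lemma lipschitz_ham_flow_pos:
  fixes G :: "'a::euclidean_space \<Rightarrow> 'a"
  assumes G: "L-lipschitz_on UNIV G" and T: "T \<ge> 0"
  shows "(exp (sqrt (1 + L\<^sup>2) * T))-lipschitz_on UNIV (ham_flow_pos G T y)"
proof (rule lipschitz_onI)
  fix v1 v2 :: 'a
  define X1 where "X1 t = ham_flow_pos G t y v1" for t
  define X2 where "X2 t = ham_flow_pos G t y v2" for t
  obtain V1 where V1: "X1 0 = y" "V1 0 = v1" "\<And>s. (X1 has_vector_derivative V1 s) (at s)"
      "\<And>s. (V1 has_vector_derivative - G (X1 s)) (at s)"
    using ham_flow_pos_solves[OF G, of y v1] unfolding X1_def[abs_def] by blast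
  obtain V2 where V2: "X2 0 = y" "V2 0 = v2" "\<And>s. (X2 has_vector_derivative V2 s) (at s)"
      "\<And>s. (V2 has_vector_derivative - G (X2 s)) (at s)"
    using ham_flow_pos_solves[OF G, of y v2] unfolding X2_def[abs_def] by blast
  have "norm ((X1 T, V1 T) - (X2 T, V2 T)) \<le> norm ((X1 0, V1 0) - (X2 0, V2 0)) * exp (sqrt (1 + L\<^sup>2) * T)"
    using lipschitz_hamiltonian_field[OF G] _ _ T
    by (rule lipschitz_ode_dist_le) (auto intro!: has_vector_derivative_Pair V1 V2)
  moreover have "norm (X1 T - X2 T) \<le> norm ((X1 T, V1 T) - (X2 T, V2 T))"
    using norm_fst_le[of "X1 T - X2 T" "V1 T - V2 T"] by simp
  ultimately show "dist (ham_flow_pos G T y v1) (ham_flow_pos G T y v2) \<le> exp (sqrt (1 + L\<^sup>2) * T) * dist v1 v2"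
    using V1 V2 by (simp add: X1_def X2_def dist_norm mult.commute)
qed simp

lemma borel_measurable_ham_flow_pos:
  fixes G :: "'a::euclidean_space \<Rightarrow> 'a"
  assumes "L-lipschitz_on UNIV G" and "T \<ge> 0"
  shows "ham_flow_pos G T y \<in> borel_measurable borel"
  using lipschitz_ham_flow_pos[OF assms]
  by (intro borel_measurable_continuous_onI lipschitz_on_continuous_on)

lemma lipschitz_on_of_norm_derivative_le:
  assumes "\<forall>z. (G has_derivative blinfun_apply (H z)) (at z)" and "\<forall>z. norm (H z) \<le> L"
  shows "L-lipschitz_on UNIV G"
proof (rule bounded_derivative_imp_lipschitz)
  show "(G has_derivative blinfun_apply (H z)) (at z within UNIV)" for z
    using assms(1) by simp
  show "onorm (blinfun_apply (H z)) \<le> L" for z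
    using assms(2) by (simp flip: norm_blinfun.rep_eq)
  show "0 \<le> L"
    using assms(2) norm_ge_zero order_trans by blast
qed simp

theorem lemma3:
  fixes f :: "'a::euclidean_space \<Rightarrow> real" and G :: "'a \<Rightarrow> 'a"
    and H :: "'a \<Rightarrow> 'a \<Rightarrow>\<^sub>L 'a" and \<Phi> :: "'a \<Rightarrow> 'a"
    and x y :: 'a and L T h :: real
  assumes grad: "\<forall>z. (f has_derivative (\<lambda>u. G z \<bullet> u)) (at z)"
    and hess: "\<forall>z. (G has_derivative blinfun_apply (H z)) (at z)"
    and C2: "continuous_on UNIV H"
    and hess_bd: "\<forall>z. norm (H z) \<le> L"
    and T_pos: "T > 0"
    and LT: "L * T^2 \<le> 2 / 5 * pi^2"
    and h_nonneg: "h \<ge> 0"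
    and T_h: "h = 0 \<or> (\<exists>N::nat. real N * h = T)"
    and \<Phi>_meas: "\<Phi> \<in> borel_measurable borel"
    and coupling: "\<forall>v. leapfrog_pos G T h x v = ham_flow_pos G T y (\<Phi> v)"
  shows "KL_div (distr std_gaussian borel (leapfrog_pos G T h x))
                (distr std_gaussian borel (ham_flow_pos G T y))
           \<le> KL_div (distr std_gaussian borel \<Phi>) std_gaussian
         \<and> (\<forall>q>1. renyi_div q (distr std_gaussian borel (leapfrog_pos G T h x))
                              (distr std_gaussian borel (ham_flow_pos G T y))
                   \<le> renyi_div q (distr std_gaussian borel \<Phi>) std_gaussian)"
proof -
  have G_lipschitz: "L-lipschitz_on UNIV G"
    using hess hess_bd by (rule lipschitz_on_of_norm_derivative_le)
  have [measurable]: "ham_flow_pos G T y \<in> borel_measurable borel"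
    using G_lipschitz T_pos by (intro borel_measurable_ham_flow_pos) auto
  interpret std_gaussian: prob_space "std_gaussian :: 'a measure"
    by (rule prob_space_std_gaussian)
  have "data_processing std_gaussian (distr std_gaussian borel \<Phi>) borel (ham_flow_pos G T y)"
    using \<Phi>_meas
    by (intro data_processing.intro data_processing_axioms.intro std_gaussian.finite_measure_axioms
        std_gaussian.finite_measure_distr) simp_all
  then interpret data_processing std_gaussian "distr std_gaussian borel \<Phi>" borel "ham_flow_pos G T y" .
  have "leapfrog_pos G T h x = ham_flow_pos G T y \<circ> \<Phi>"
    using coupling by (simp add: fun_eq_iff)
  then have "distr std_gaussian borel (leapfrog_pos G T h x)
      = distr (distr std_gaussian borel \<Phi>) borel (ham_flow_pos G T y)"
    using \<Phi>_meas by (simp add: distr_distr)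
  then show ?thesis
    using KL_div_distr_le renyi_div_distr_le by (simp only:) blast
qed

end
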